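(* Let $V$ and $H$ be real Hilbert spaces with scalar products $(\cdot,\cdot)_V$, $(\cdot,\cdot)_H$ and norms $\|\cdot\|_V$, $\|\cdot\|_H$, and let $\gamma:V\to H$ be a continuous, linear and compact operator. Let $\lambda_1\le\lambda_2\le\dots$ be the eigenvalues of the problem: find $\lambda\in\mathbb{R}$, $u\in V$, $u\ne0$, with $(u,v)_V=\lambda(\gamma u,\gamma v)_H$ for all $v\in V$, and let $C_\gamma$ be the smallest constant such that $\|\gamma v\|_H\le C_\gamma\|v\|_V$ for all $v\in V$. Let $u_*\in V$ and $\lambda_*\in\mathbb{R}$ be arbitrary and let $w\in V$ satisfy $(w,v)_V=(u_*,v)_V-\lambda_*(\gamma u_*,\gamma v)_H$ for all $v\in V$. Assume that $$\left|\frac{\lambda_1-\lambda_*}{\lambda_1}\right|\le\left|\frac{\lambda_i-\lambda_*}{\lambda_i}\right|\quad\forall i=1,2,\dots.$$ Further let $A\ge0$ and $B\ge0$ satisfy $B<\lambda_*\|\gamma u_*\|_H$ and $\|w\|_V\le A+C_\gamma B$. Then $$X_2^2\le\lambda_1\quad\text{and}\quad C_\gamma\le 1/X_2,$$ where $$X_2=\tfrac12\left(-\alpha+\sqrt{\alpha^2+4(\lambda_*-\beta)}\right),\qquad \alpha=\frac{A}{\|\gamma u_*\|_H},\qquad \beta=\frac{B}{\|\gamma u_*\|_H}.$$ *)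

theory Defs
  imports "HOL-Analysis.Analysis"
begin

definition compact_operator :: "('a::real_normed_vector \<Rightarrow> 'b::real_normed_vector) \<Rightarrow> bool" where
  "compact_operator T \<longleftrightarrow> (\<forall>S. bounded S \<longrightarrow> compact (closure (T ` S)))"

definition is_eigenvalue ::
  "('v::real_inner \<Rightarrow> 'h::real_inner) \<Rightarrow> real \<Rightarrow> bool" where
  "is_eigenvalue g lam \<longleftrightarrow>
     (\<exists>u. u \<noteq> 0 \<and> (\<forall>v. inner u v = lam * inner (g u) (g v)))"

end

theory Submission
  imports Defs
begin

text \<open>
  With \<open>K = \<gamma>\<^sup>* \<gamma>\<close> (built via the Riesz representation theorem), \<open>K\<close> is compact, self-adjoint and
  positive, and \<open>K x = \<mu> x\<close>, \<open>x \<noteq> 0\<close>, \<open>\<mu> > 0\<close> means exactly that \<open>1/\<mu>\<close> is an eigenvalue of the problem.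
  Maximising Rayleigh quotients of compact self-adjoint operators gives the eigenvalues needed:
  for \<open>K\<close> itself this yields \<open>\<lambda>\<^sub>1 \<parallel>\<gamma> v\<parallel>\<^sup>2 \<le> \<parallel>v\<parallel>\<^sup>2\<close>, i.e. \<open>C\<^sub>\<gamma> \<le> 1/\<surd>\<lambda>\<^sub>1\<close>; for \<open>(a + b) K - K\<^sup>2\<close>
  it shows that \<open>\<langle>(K - a)(K - b) u, u\<rangle> \<ge> 0\<close> whenever \<open>K\<close> has no eigenvalue in \<open>(a, b)\<close>.
  The closeness hypothesis on \<open>\<lambda>\<^sub>*\<close> rules out eigenvalues of \<open>K\<close> in \<open>(\<lambda>\<^sub>1/\<lambda>\<^sub>*\<^sup>2, 1/\<lambda>\<^sub>1)\<close>; since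
  \<open>w = u\<^sub>* - \<lambda>\<^sub>* K u\<^sub>*\<close>, this gives \<open>\<parallel>\<gamma> u\<^sub>*\<parallel> (\<lambda>\<^sub>* - \<lambda>\<^sub>1)/\<surd>\<lambda>\<^sub>1 \<le> \<parallel>w\<parallel> \<le> A + B/\<surd>\<lambda>\<^sub>1\<close>.
  Thus \<open>x = \<surd>\<lambda>\<^sub>1\<close> satisfies \<open>x\<^sup>2 + \<alpha> x \<ge> \<lambda>\<^sub>* - \<beta>\<close>, whose positive root is \<open>X\<^sub>2\<close>, so \<open>X\<^sub>2 \<le> \<surd>\<lambda>\<^sub>1\<close>.
\<close>

section \<open>Riesz representation and adjoints in Hilbert spaces\<close>

lemma norm_add_scaleR_power2:
  fixes z v :: "'a::real_inner"
  shows "(norm (z + t *\<^sub>R v))\<^sup>2 = (norm z)\<^sup>2 + 2 * t * inner z v + t\<^sup>2 * (norm v)\<^sup>2"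
  unfolding power2_norm_eq_inner by (simp add: inner_add inner_commute power2_eq_square algebra_simps)

lemma linear_coeff_eq_0_if_quadratic_nonneg:
  fixes d q :: real
  assumes "\<And>t. 0 \<le> t * d + t\<^sup>2 * q" and "0 \<le> q"
  shows "d = 0"
proof (rule ccontr)
  assume "d \<noteq> 0"
  define u where "u = d / (q + 1)"
  have "d = u * (q + 1)" unfolding u_def using \<open>0 \<le> q\<close> by simp
  then have "- u\<^sup>2 = (- u) * d + (- u)\<^sup>2 * q" by (simp add: power2_eq_square algebra_simps)
  also have "\<dots> \<ge> 0" by (rule assms(1))
  finally show False using \<open>d \<noteq> 0\<close> \<open>d = u * (q + 1)\<close> by simp
qed

lemma energy_minimizer_exists:
  fixes f :: "'v::{real_inner,complete_space} \<Rightarrow> real"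
  assumes "bounded_linear f"
  shows "\<exists>z. \<forall>y. (norm z)\<^sup>2 / 2 - f z \<le> (norm y)\<^sup>2 / 2 - f y"
proof -
  interpret f: bounded_linear f by fact
  obtain c where c: "\<And>x. norm (f x) \<le> norm x * c" using f.pos_bounded by blast
  define F where "F y = (norm y)\<^sup>2 / 2 - f y" for y
  have "F y \<ge> - c\<^sup>2 / 2" for y
  proof -
    have "f y \<le> norm y * c" using c[of y] by simp
    moreover have "(norm y - c)\<^sup>2 \<ge> 0" by simp
    ultimately show ?thesis unfolding F_def by (simp add: power2_eq_square algebra_simps)
  qed
  then have bdd: "bdd_below (range F)" by (meson bdd_belowI2)
  define m where "m = (INF y. F y)"
  have m_le: "m \<le> F y" for y unfolding m_def by (rule cINF_lower[OF bdd]) simp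
  have "\<exists>y. F y < m + 1 / (real n + 1)" for n :: nat
    using cINF_less_iff[OF _ bdd, of "m + 1 / (real n + 1)"] unfolding m_def by auto
  then obtain ys where ys: "\<And>n. F (ys n) < m + 1 / (real n + 1)" by metis
  have inv_lim: "(\<lambda>n. 1 / (real n + 1)) \<longlonglongrightarrow> 0"
    using LIMSEQ_inverse_real_of_nat by (simp add: inverse_eq_divide add.commute)
  \<comment> \<open>The parallelogram law turns near-minimality of two points into closeness.\<close>
  have parallelogram: "(norm (a - b))\<^sup>2 = 4 * (F a + F b - 2 * F ((a + b) /\<^sub>R 2))" for a b
  proof -
    have "(norm (a - b))\<^sup>2 + (norm (a + b))\<^sup>2 = 2 * (norm a)\<^sup>2 + 2 * (norm b)\<^sup>2"
      by (simp add: power2_norm_eq_inner inner_diff inner_add inner_commute)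
    moreover have "(norm ((a + b) /\<^sub>R 2))\<^sup>2 = (norm (a + b))\<^sup>2 / 4"
      by (simp add: power2_eq_square)
    ultimately show ?thesis unfolding F_def by (simp add: f.scale f.add algebra_simps)
  qed
  have "Cauchy ys"
  proof (rule metric_CauchyI)
    fix e :: real assume "e > 0"
    then obtain N :: nat where N: "8 / e\<^sup>2 < real N + 1"
      using reals_Archimedean2 by (metis add.commute less_add_one order_less_trans of_nat_Suc)
    have "dist (ys i) (ys j) < e" if "i \<ge> N" "j \<ge> N" for i j
    proof -
      have "1 / (real k + 1) \<le> 1 / (real N + 1)" if "k \<ge> N" for k
        using that by (auto simp: divide_simps)
      then have "F (ys i) < m + 1 / (real N + 1)" "F (ys j) < m + 1 / (real N + 1)"
        using ys[of i] ys[of j] \<open>i \<ge> N\<close> \<open>j \<ge> N\<close> by fastforce+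
      then have "(norm (ys i - ys j))\<^sup>2 < 8 / (real N + 1)"
        using parallelogram[of "ys i" "ys j"] m_le[of "(ys i + ys j) /\<^sub>R 2"] by simp
      also have "\<dots> < e\<^sup>2" using N \<open>e > 0\<close> by (simp add: field_simps)
      finally show ?thesis using \<open>e > 0\<close> by (simp add: dist_norm power_less_imp_less_base)
    qed
    then show "\<exists>M. \<forall>i\<ge>M. \<forall>j\<ge>M. dist (ys i) (ys j) < e" by blast
  qed
  then obtain z where z: "ys \<longlonglongrightarrow> z" using Cauchy_convergent_iff convergent_def by blast
  have "(\<lambda>n. F (ys n)) \<longlonglongrightarrow> F z"
    unfolding F_def by (intro tendsto_intros z f.tendsto) simp
  moreover have "(\<lambda>n. F (ys n)) \<longlonglongrightarrow> m"
  proof (rule tendsto_sandwich[of "\<lambda>n. m" _ _ "\<lambda>n. m + 1 / (real n + 1)"])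
    show "(\<lambda>n. m + 1 / (real n + 1)) \<longlonglongrightarrow> m"
      using tendsto_add[OF tendsto_const inv_lim, of m] by simp
  qed (use m_le ys in \<open>auto intro: less_imp_le always_eventually\<close>)
  ultimately have "F z = m" by (rule LIMSEQ_unique)
  then show ?thesis using m_le unfolding F_def by metis
qed

theorem riesz_representation:
  fixes f :: "'v::{real_inner,complete_space} \<Rightarrow> real"
  assumes "bounded_linear f"
  shows "\<exists>z. \<forall>v. f v = inner z v"
proof -
  interpret f: bounded_linear f by fact
  obtain z where z: "\<And>y. (norm z)\<^sup>2 / 2 - f z \<le> (norm y)\<^sup>2 / 2 - f y"
    using energy_minimizer_exists[OF assms] by blast
  have "inner z v - f v = 0" for v
  proof (rule linear_coeff_eq_0_if_quadratic_nonneg)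
    show "0 \<le> t * (inner z v - f v) + t\<^sup>2 * ((norm v)\<^sup>2 / 2)" for t
      using z[of "z + t *\<^sub>R v"] unfolding norm_add_scaleR_power2
      by (simp add: f.add f.scale algebra_simps)
  qed simp
  then have "\<forall>v. f v = inner z v" by simp
  then show ?thesis by blast
qed

lemma adjoint_hilbert:
  fixes f :: "'a::{real_inner,complete_space} \<Rightarrow> 'b::real_inner"
  assumes "bounded_linear f"
  shows "inner (f x) y = inner x (adjoint f y)"
proof -
  have "\<exists>w. \<forall>x. f x \<bullet> y = x \<bullet> w" for y
  proof -
    have "bounded_linear (\<lambda>x. f x \<bullet> y)"
      using bounded_linear_compose[OF bounded_linear_inner_left assms] by (simp add: comp_def)
    then show ?thesis using riesz_representation by (metis inner_commute)
  qed
  then have "\<exists>f'. \<forall>x y. f x \<bullet> y = x \<bullet> f' y" by metis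
  then show ?thesis
    unfolding adjoint_def by (rule someI2_ex) blast
qed

lemma bounded_linear_adjoint_hilbert:
  fixes f :: "'a::{real_inner,complete_space} \<Rightarrow> 'b::real_inner"
  assumes "bounded_linear f"
  shows "bounded_linear (adjoint f)"
proof -
  interpret f: bounded_linear f by fact
  obtain c where c: "c > 0" "\<And>x. norm (f x) \<le> norm x * c" using f.pos_bounded by blast
  show ?thesis
  proof (rule bounded_linear_intro[where K = c])
    show "adjoint f (x + y) = adjoint f x + adjoint f y" for x y
      by (rule vector_eq_ldot[THEN iffD1])
        (simp add: inner_add_right flip: adjoint_hilbert[OF assms])
    show "adjoint f (r *\<^sub>R x) = r *\<^sub>R adjoint f x" for r x
      by (rule vector_eq_ldot[THEN iffD1]) (simp flip: adjoint_hilbert[OF assms])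
    show "norm (adjoint f y) \<le> norm y * c" for y
    proof -
      have "(norm (adjoint f y))\<^sup>2 = inner (f (adjoint f y)) y"
        by (simp add: adjoint_hilbert[OF assms] power2_norm_eq_inner)
      also have "\<dots> \<le> norm (adjoint f y) * c * norm y"
        using norm_cauchy_schwarz[of "f (adjoint f y)" y] mult_right_mono[OF c(2), where c = "norm y"]
        by (meson norm_ge_zero order_trans)
      finally show ?thesis using c(1)
        by (cases "adjoint f y = 0") (simp_all add: power2_eq_square mult.commute mult.left_commute)
    qed
  qed
qed

section \<open>Compact self-adjoint operators\<close>

definition selfadjoint :: "('a::real_inner \<Rightarrow> 'a) \<Rightarrow> bool" where
  "selfadjoint T \<longleftrightarrow> (\<forall>x y. inner (T x) y = inner x (T y))"

lemma selfadjoint_adjoint_comp: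
  fixes f :: "'a::{real_inner,complete_space} \<Rightarrow> 'b::real_inner"
  assumes "bounded_linear f"
  shows "selfadjoint (adjoint f \<circ> f)"
  unfolding selfadjoint_def by (simp add: inner_commute flip: adjoint_hilbert[OF assms])

lemma compact_operator_comp_bounded_linear:
  fixes T :: "'b::real_normed_vector \<Rightarrow> 'c::real_normed_vector" and L :: "'a::real_normed_vector \<Rightarrow> 'b"
  assumes "compact_operator T" and "bounded_linear L"
  shows "compact_operator (T \<circ> L)"
  unfolding compact_operator_def
proof (intro allI impI)
  fix S :: "'a set" assume "bounded S"
  then have "bounded (L ` S)" using assms(2) by (rule bounded_linear_image)
  then show "compact (closure ((T \<circ> L) ` S))"
  proof -
    have "compact (closure (T ` L ` S))" using assms(1) \<open>bounded (L ` S)\<close> unfolding compact_operator_def by blast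
    then show ?thesis by (simp add: image_comp)
  qed
qed
lemma compact_operator_bounded_linear_comp:
  fixes T :: "'a::real_normed_vector \<Rightarrow> 'b::real_normed_vector" and L :: "'b \<Rightarrow> 'c::real_normed_vector"
  assumes "bounded_linear L" and "compact_operator T"
  shows "compact_operator (L \<circ> T)"
  unfolding compact_operator_def
proof (intro allI impI)
  fix S :: "'a set" assume "bounded S"
  then have "compact (closure (T ` S))" using assms(2) by (simp add: compact_operator_def)
  moreover have "continuous_on (closure (T ` S)) L"
    using assms(1) linear_continuous_on by blast
  ultimately have K: "compact (L ` closure (T ` S))" by (rule compact_continuous_image[rotated])
  have "closure ((L \<circ> T) ` S) \<subseteq> L ` closure (T ` S)"
  proof (rule closure_minimal)
    show "(L \<circ> T) ` S \<subseteq> L ` closure (T ` S)" using closure_subset by fastforce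
  qed (rule compact_imp_closed[OF K])
  then show "compact (closure ((L \<circ> T) ` S))"
    using compact_Int_closed[OF K closed_closure, of "(L \<circ> T) ` S"] by (simp only: Int_absorb1)
qed
lemma compact_operator_convergent_subseq:
  fixes T :: "'a::real_normed_vector \<Rightarrow> 'b::real_normed_vector" and xs :: "nat \<Rightarrow> 'a"
  assumes "compact_operator T" and "bounded (range xs)"
  shows "\<exists>r. strict_mono r \<and> convergent (\<lambda>n. T (xs (r n)))"
proof -
  have "seq_compact (closure (T ` range xs))"
    using assms unfolding compact_operator_def by (blast intro: compact_imp_seq_compact)
  moreover have "\<forall>n. T (xs n) \<in> closure (T ` range xs)" by (auto intro: closure_subset[THEN subsetD])
  ultimately obtain l r where "strict_mono r" "((\<lambda>n. T (xs n)) \<circ> r) \<longlonglongrightarrow> l"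
    using seq_compactE[of _ "\<lambda>n. T (xs n)"] by blast
  then show ?thesis by (auto simp: convergent_def comp_def)
qed

lemma selfadjoint_quadratic_form_add_scaleR:
  assumes "linear M" and "selfadjoint M"
  shows "inner (M (x + t *\<^sub>R y)) (x + t *\<^sub>R y)
           = inner (M x) x + 2 * t * inner (M x) y + t\<^sup>2 * inner (M y) y"
proof -
  interpret M: linear M by fact
  have "inner (M y) x = inner (M x) y"
    using assms(2) unfolding selfadjoint_def by (metis inner_commute)
  then show ?thesis
    by (simp add: M.add M.scale inner_add inner_commute algebra_simps power2_eq_square)
qed

lemma selfadjoint_nonneg_norm_power2_le:
  assumes "linear B" and "selfadjoint B"
    and nonneg: "\<And>y. 0 \<le> inner (B y) y"
    and bound: "\<And>y. inner (B y) y \<le> D * (norm y)\<^sup>2" and "0 < D"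
  shows "(norm (B x))\<^sup>2 \<le> D * inner (B x) x"
proof -
  define y where "y = B x"
  have "inner (B x) y = (norm y)\<^sup>2" by (simp add: y_def power2_norm_eq_inner)
  then have "0 \<le> inner (B x) x - 2 * (norm y)\<^sup>2 / D + inner (B y) y / D\<^sup>2"
    using nonneg[of "x + (- 1 / D) *\<^sub>R y"]
    unfolding selfadjoint_quadratic_form_add_scaleR[OF assms(1,2)] by (simp add: power2_eq_square)
  moreover have "inner (B y) y / D\<^sup>2 \<le> (norm y)\<^sup>2 / D"
    using bound[of y] \<open>0 < D\<close> by (simp add: divide_simps power2_eq_square mult.commute)
  ultimately have "(norm y)\<^sup>2 / D \<le> inner (B x) x" by linarith
  then show ?thesis using \<open>0 < D\<close> by (simp add: y_def divide_simps mult.commute)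
qed

lemma rayleigh_quotient_supremum:
  fixes M :: "'a::real_inner \<Rightarrow> 'a"
  assumes "bounded_linear M" and x0: "p * (norm x0)\<^sup>2 < inner (M x0) x0"
  obtains \<sigma> xs where "p < \<sigma>" and "\<And>x. inner (M x) x \<le> \<sigma> * (norm x)\<^sup>2"
    and "\<And>n. norm (xs n) = 1" and "(\<lambda>n. inner (M (xs n)) (xs n)) \<longlonglongrightarrow> \<sigma>"
proof -
  interpret M: bounded_linear M by fact
  obtain c where c: "\<And>x. norm (M x) \<le> norm x * c" using M.pos_bounded by blast
  define Q where "Q x = inner (M x) x" for x
  have Q_normalize: "Q x = (norm x)\<^sup>2 * Q (x /\<^sub>R norm x)" if "x \<noteq> 0" for x
    using that unfolding Q_def by (simp add: M.scale power2_eq_square field_simps)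
  define S where "S = sphere (0::'a) 1"
  have "Q x \<le> c" if "x \<in> S" for x
    using that norm_cauchy_schwarz[of "M x" x] c[of x] unfolding Q_def S_def by simp
  then have bdd: "bdd_above (Q ` S)" by (rule bdd_aboveI2)
  define \<sigma> where "\<sigma> = (SUP x\<in>S. Q x)"
  have Q_le: "Q x \<le> \<sigma>" if "x \<in> S" for x unfolding \<sigma>_def by (rule cSUP_upper[OF that bdd])
  have x0_ne: "x0 \<noteq> 0" using x0 by auto
  then have "x0 /\<^sub>R norm x0 \<in> S" unfolding S_def by simp
  moreover have "p < Q (x0 /\<^sub>R norm x0)"
    using x0 Q_normalize[OF x0_ne] x0_ne unfolding Q_def by (simp add: mult_less_cancel_left_pos)
  ultimately have "p < \<sigma>" using Q_le by fastforce
  moreover have "inner (M x) x \<le> \<sigma> * (norm x)\<^sup>2" for x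
  proof (cases "x = 0")
    case False
    then have "Q (x /\<^sub>R norm x) \<le> \<sigma>" using Q_le unfolding S_def by simp
    then have "Q x \<le> (norm x)\<^sup>2 * \<sigma>"
      using Q_normalize[OF False] by (metis mult_left_mono zero_le_power2)
    then show ?thesis by (simp add: Q_def mult.commute)
  qed simp
  moreover obtain xs where "\<And>n. xs n \<in> S" and xs: "\<And>n. \<sigma> - 1 / (real n + 1) < Q (xs n)"
  proof -
    have "\<exists>x\<in>S. \<sigma> - 1 / (real n + 1) < Q x" for n :: nat
      using less_cSUP_iff[OF _ bdd, of "\<sigma> - 1 / (real n + 1)"] \<open>x0 /\<^sub>R norm x0 \<in> S\<close>
      unfolding \<sigma>_def by auto
    then show ?thesis using that by metis
  qed
  moreover have "(\<lambda>n. Q (xs n)) \<longlonglongrightarrow> \<sigma>"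
  proof (rule tendsto_sandwich[of "\<lambda>n. \<sigma> - 1 / (real n + 1)" _ _ "\<lambda>n. \<sigma>"])
    have "(\<lambda>n. 1 / (real n + 1)) \<longlonglongrightarrow> 0"
      using LIMSEQ_inverse_real_of_nat by (simp add: inverse_eq_divide add.commute)
    then show "(\<lambda>n. \<sigma> - 1 / (real n + 1)) \<longlonglongrightarrow> \<sigma>"
      using tendsto_diff[OF tendsto_const, of _ 0 sequentially \<sigma>] by simp
  qed (use xs Q_le \<open>\<And>n. xs n \<in> S\<close> in \<open>auto intro: less_imp_le always_eventually\<close>)
  ultimately show ?thesis using that[of \<sigma> xs] unfolding Q_def S_def by auto
qed

lemma eigenvector_of_approximate_eigenvectors:
  fixes M :: "'a::real_normed_vector \<Rightarrow> 'a" and xs :: "nat \<Rightarrow> 'a"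
  assumes "bounded_linear M" and "compact_operator M" and "\<sigma> \<noteq> 0"
    and unit: "\<And>n. norm (xs n) = 1"
    and residual: "(\<lambda>n. \<sigma> *\<^sub>R xs n - M (xs n)) \<longlonglongrightarrow> 0"
  shows "\<exists>x. x \<noteq> 0 \<and> M x = \<sigma> *\<^sub>R x"
proof -
  interpret M: bounded_linear M by fact
  have "bounded (range xs)" using unit by (auto simp: bounded_iff intro!: exI[of _ 1])
  then obtain r z where r: "strict_mono r" and z: "(\<lambda>n. M (xs (r n))) \<longlonglongrightarrow> z"
    using compact_operator_convergent_subseq[OF assms(2)] unfolding convergent_def by blast
  have "(\<lambda>n. \<sigma> *\<^sub>R xs (r n) - M (xs (r n))) \<longlonglongrightarrow> 0"
    using LIMSEQ_subseq_LIMSEQ[OF residual r] by (simp add: comp_def)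
  from tendsto_add[OF this z] have "(\<lambda>n. \<sigma> *\<^sub>R xs (r n)) \<longlonglongrightarrow> z" by simp
  from tendsto_scaleR[OF tendsto_const this, of "1 / \<sigma>"]
  have lim: "(\<lambda>n. xs (r n)) \<longlonglongrightarrow> z /\<^sub>R \<sigma>" using \<open>\<sigma> \<noteq> 0\<close> by (simp add: divide_inverse_commute)
  then have "norm (z /\<^sub>R \<sigma>) = 1"
    using tendsto_norm[OF lim] unit by (simp add: LIMSEQ_const_iff)
  moreover have "M (z /\<^sub>R \<sigma>) = z" using LIMSEQ_unique[OF M.tendsto[OF lim] z] .
  ultimately show ?thesis using \<open>\<sigma> \<noteq> 0\<close> by (intro exI[of _ "z /\<^sub>R \<sigma>"]) auto
qed

lemma compact_selfadjoint_eigenvalue_above: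
  fixes M :: "'a::real_inner \<Rightarrow> 'a"
  assumes "bounded_linear M" and "selfadjoint M" and "compact_operator M"
    and "0 \<le> p" and "p * (norm x0)\<^sup>2 < inner (M x0) x0"
  shows "\<exists>\<sigma> x. p < \<sigma> \<and> x \<noteq> 0 \<and> M x = \<sigma> *\<^sub>R x"
proof -
  interpret M: bounded_linear M by fact
  obtain c where c: "c > 0" "\<And>x. norm (M x) \<le> norm x * c" using M.pos_bounded by blast
  obtain \<sigma> xs where "p < \<sigma>" and \<sigma>_bound: "\<And>x. inner (M x) x \<le> \<sigma> * (norm x)\<^sup>2"
    and unit: "\<And>n. norm (xs n) = 1" and lim: "(\<lambda>n. inner (M (xs n)) (xs n)) \<longlonglongrightarrow> \<sigma>"
    using rayleigh_quotient_supremum[OF assms(1,5)] by blast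
  define B where "B x = \<sigma> *\<^sub>R x - M x" for x
  have B_form: "inner (B x) x = \<sigma> * (norm x)\<^sup>2 - inner (M x) x" for x
    by (simp add: B_def inner_diff_left power2_norm_eq_inner)
  have "linear B"
    unfolding B_def by (intro bounded_linear.linear bounded_linear_sub bounded_linear_scaleR_right assms(1))
  moreover have "selfadjoint B"
    using assms(2) by (simp add: selfadjoint_def B_def inner_diff_left inner_diff_right)
  moreover have "0 \<le> inner (B y) y" for y using \<sigma>_bound[of y] by (simp add: B_form)
  moreover have "inner (B y) y \<le> (\<sigma> + c) * (norm y)\<^sup>2" for y
  proof -
    have "- inner (M y) y \<le> norm y * c * norm y"
      using norm_cauchy_schwarz[of "- M y" y] mult_right_mono[OF c(2)[of y], of "norm y"] by simp
    then show ?thesis by (simp add: B_form power2_eq_square algebra_simps)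
  qed
  moreover have "0 < \<sigma> + c" using \<open>p < \<sigma>\<close> \<open>0 \<le> p\<close> c(1) by linarith
  ultimately have B_bound: "(norm (B x))\<^sup>2 \<le> (\<sigma> + c) * inner (B x) x" for x
    by (rule selfadjoint_nonneg_norm_power2_le)
  have residual_bound:
    "(norm (B (xs n)))\<^sup>2 \<le> (\<sigma> + c) * (\<sigma> - inner (M (xs n)) (xs n))" for n
    using B_bound[of "xs n"] unit[of n] by (simp add: B_form)
  have bound_lim: "(\<lambda>n. (\<sigma> + c) * (\<sigma> - inner (M (xs n)) (xs n))) \<longlonglongrightarrow> 0"
    using tendsto_mult[OF tendsto_const tendsto_diff[OF tendsto_const lim], of "\<sigma> + c" \<sigma>] by simp
  have "(\<lambda>n. (norm (B (xs n)))\<^sup>2) \<longlonglongrightarrow> 0"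
    by (rule tendsto_sandwich[OF _ _ tendsto_const bound_lim])
      (simp_all add: always_eventually residual_bound)
  from tendsto_real_sqrt[OF this] have "(\<lambda>n. norm (B (xs n))) \<longlonglongrightarrow> 0" by simp
  then have residual: "(\<lambda>n. \<sigma> *\<^sub>R xs n - M (xs n)) \<longlonglongrightarrow> 0"
    by (simp add: B_def tendsto_norm_zero_iff)
  have "\<sigma> \<noteq> 0" using \<open>p < \<sigma>\<close> \<open>0 \<le> p\<close> by simp
  from eigenvector_of_approximate_eigenvectors[OF assms(1,3) this unit residual]
  show ?thesis using \<open>p < \<sigma>\<close> by auto
qed

lemma selfadjoint_quadratic_relation_discriminant:
  assumes "selfadjoint K" and "x \<noteq> 0" and KKx: "K (K x) = s *\<^sub>R K x - \<sigma> *\<^sub>R x"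
  shows "4 * \<sigma> \<le> s\<^sup>2"
proof (rule ccontr)
  assume "\<not> 4 * \<sigma> \<le> s\<^sup>2"
  define a where "a = norm (K x)"
  define n where "n = norm x"
  have "inner (K (K x)) x = a\<^sup>2"
    using assms(1) unfolding selfadjoint_def a_def by (simp add: power2_norm_eq_inner)
  then have "a\<^sup>2 = s * inner (K x) x - \<sigma> * n\<^sup>2"
    unfolding KKx n_def by (simp add: inner_diff_left power2_norm_eq_inner)
  also have "s * inner (K x) x \<le> \<bar>s\<bar> * \<bar>inner (K x) x\<bar>" by (simp add: abs_mult[symmetric])
  also have "\<dots> \<le> \<bar>s\<bar> * (a * n)"
    unfolding a_def n_def by (intro mult_left_mono Cauchy_Schwarz_ineq2) simp
  finally have "(a - \<bar>s\<bar> * n / 2)\<^sup>2 + (\<sigma> - s\<^sup>2 / 4) * n\<^sup>2 \<le> 0"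
    by (simp add: power2_eq_square algebra_simps)
  moreover have "0 < (\<sigma> - s\<^sup>2 / 4) * n\<^sup>2"
    using \<open>\<not> 4 * \<sigma> \<le> s\<^sup>2\<close> \<open>x \<noteq> 0\<close> by (simp add: n_def)
  ultimately show False by (smt (verit) zero_le_power2)
qed

lemma eigenvector_of_quadratic_relation:
  assumes "linear K" and "selfadjoint K" and "x \<noteq> 0" and KKx: "K (K x) = s *\<^sub>R K x - \<sigma> *\<^sub>R x"
  shows "\<exists>y \<mu>. y \<noteq> 0 \<and> K y = \<mu> *\<^sub>R y \<and> \<mu>\<^sup>2 - s * \<mu> + \<sigma> = 0"
proof -
  interpret K: linear K by fact
  have "4 * \<sigma> \<le> s\<^sup>2" by (rule selfadjoint_quadratic_relation_discriminant[OF assms(2-4)])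
  define d where "d = sqrt (s\<^sup>2 - 4 * \<sigma>)"
  have "d\<^sup>2 = s\<^sup>2 - 4 * \<sigma>" unfolding d_def using \<open>4 * \<sigma> \<le> s\<^sup>2\<close> by simp
  define \<mu>\<^sub>1 \<mu>\<^sub>2 where "\<mu>\<^sub>1 = (s - d) / 2" and "\<mu>\<^sub>2 = (s + d) / 2"
  have sum: "\<mu>\<^sub>1 + \<mu>\<^sub>2 = s" and prod: "\<mu>\<^sub>1 * \<mu>\<^sub>2 = \<sigma>"
    unfolding \<mu>\<^sub>1_def \<mu>\<^sub>2_def using \<open>d\<^sup>2 = s\<^sup>2 - 4 * \<sigma>\<close> by (simp_all add: field_simps power2_eq_square)
  have root: "\<mu>\<^sup>2 - s * \<mu> + \<sigma> = 0" if "\<mu> = \<mu>\<^sub>1 \<or> \<mu> = \<mu>\<^sub>2" for \<mu>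
    using that unfolding sum[symmetric] prod[symmetric] by (auto simp: power2_eq_square algebra_simps)
  \<comment> \<open>\<open>(K - \<mu>\<^sub>1)(K - \<mu>\<^sub>2) x = 0\<close>, so \<open>y\<close> or else \<open>x\<close> is an eigenvector.\<close>
  define y where "y = K x - \<mu>\<^sub>2 *\<^sub>R x"
  have "K y - \<mu>\<^sub>1 *\<^sub>R y = K (K x) - (\<mu>\<^sub>1 + \<mu>\<^sub>2) *\<^sub>R K x + (\<mu>\<^sub>1 * \<mu>\<^sub>2) *\<^sub>R x"
    unfolding y_def by (simp add: K.diff K.scale algebra_simps scaleR_add_left)
  then have "K y = \<mu>\<^sub>1 *\<^sub>R y" unfolding KKx sum prod by simp
  show ?thesis
  proof (cases "y = 0")
    case True
    then have "K x = \<mu>\<^sub>2 *\<^sub>R x" unfolding y_def by simp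
    then show ?thesis using \<open>x \<noteq> 0\<close> root by blast
  next
    case False
    then show ?thesis using \<open>K y = \<mu>\<^sub>1 *\<^sub>R y\<close> root by blast
  qed
qed

theorem spectral_gap_quadratic_form_nonneg:
  fixes K :: "'a::real_inner \<Rightarrow> 'a"
  assumes "bounded_linear K" and "selfadjoint K" and "compact_operator K"
    and "0 \<le> a" and "a \<le> b"
    and gap: "\<And>x \<mu>. x \<noteq> 0 \<Longrightarrow> K x = \<mu> *\<^sub>R x \<Longrightarrow> \<mu> \<le> a \<or> b \<le> \<mu>"
  shows "0 \<le> (norm (K u))\<^sup>2 - (a + b) * inner (K u) u + a * b * (norm u)\<^sup>2"
proof (rule ccontr)
  assume neg: "\<not> ?thesis"
  interpret K: bounded_linear K by fact
  define L where "L x = (a + b) *\<^sub>R x - K x" for x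
  have L: "bounded_linear L"
    unfolding L_def by (intro bounded_linear_sub bounded_linear_scaleR_right assms(1))
  \<comment> \<open>Otherwise \<open>M = (a + b) K - K\<^sup>2\<close> has an eigenvalue above \<open>a b\<close>, which forces one of \<open>K\<close> into \<open>(a, b)\<close>.\<close>
  define M where "M = K \<circ> L"
  have M: "M x = (a + b) *\<^sub>R K x - K (K x)" for x by (simp add: M_def L_def K.diff K.scale)
  have "bounded_linear M" unfolding M_def comp_def by (rule bounded_linear_compose[OF assms(1) L])
  moreover have "selfadjoint M"
    using assms(2) unfolding selfadjoint_def M by (simp add: inner_diff_left inner_diff_right)
  moreover have "compact_operator M"
    unfolding M_def by (rule compact_operator_comp_bounded_linear[OF assms(3) L])
  moreover have "0 \<le> a * b" using \<open>0 \<le> a\<close> \<open>a \<le> b\<close> by simp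
  moreover have "a * b * (norm u)\<^sup>2 < inner (M u) u"
    using neg assms(2) unfolding M selfadjoint_def
    by (simp add: inner_diff_left power2_norm_eq_inner)
  ultimately have "\<exists>\<sigma> x. a * b < \<sigma> \<and> x \<noteq> 0 \<and> M x = \<sigma> *\<^sub>R x"
    by (rule compact_selfadjoint_eigenvalue_above)
  then obtain \<sigma> x where "a * b < \<sigma>" "x \<noteq> 0" "M x = \<sigma> *\<^sub>R x" by blast
  then have "K (K x) = (a + b) *\<^sub>R K x - \<sigma> *\<^sub>R x" unfolding M by (simp add: algebra_simps)
  from eigenvector_of_quadratic_relation[OF K.linear assms(2) \<open>x \<noteq> 0\<close> this]
  obtain y \<mu> where "y \<noteq> 0" "K y = \<mu> *\<^sub>R y" "\<mu>\<^sup>2 - (a + b) * \<mu> + \<sigma> = 0" by blast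
  then have "(\<mu> - a) * (\<mu> - b) < 0" using \<open>a * b < \<sigma>\<close> by (simp add: power2_eq_square algebra_simps)
  then have "a < \<mu> \<and> \<mu> < b" using \<open>a \<le> b\<close> by (auto simp: mult_less_0_iff)
  with gap[OF \<open>y \<noteq> 0\<close> \<open>K y = \<mu> *\<^sub>R y\<close>] show False by linarith
qed

section \<open>The eigenvalue problem and the operator \<open>\<gamma>\<^sup>* \<gamma>\<close>\<close>

lemma is_eigenvalue_pos:
  assumes "is_eigenvalue g lam"
  shows "0 < lam"
proof -
  from assms obtain u where "u \<noteq> 0" and "inner u u = lam * inner (g u) (g u)"
    unfolding is_eigenvalue_def by blast
  moreover have "0 < inner u u" using \<open>u \<noteq> 0\<close> by simp
  moreover have "0 \<le> inner (g u) (g u)" by simp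
  ultimately show ?thesis by (metis not_less zero_less_mult_iff)
qed

lemma is_eigenvalue_if_gram_eigenvector:
  fixes g :: "'v::{real_inner,complete_space} \<Rightarrow> 'h::real_inner"
  assumes "bounded_linear g" and "x \<noteq> 0" and "adjoint g (g x) = \<mu> *\<^sub>R x" and "0 < \<mu>"
  shows "is_eigenvalue g (1 / \<mu>)"
  unfolding is_eigenvalue_def
proof (intro exI conjI allI)
  fix v
  have "\<mu> * inner x v = inner (g x) (g v)"
    using adjoint_hilbert[OF assms(1), of v "g x"] assms(3) by (simp add: inner_commute)
  then show "inner x v = 1 / \<mu> * inner (g x) (g v)" using \<open>0 < \<mu>\<close> by (simp add: field_simps)
qed fact

lemma
  fixes g :: "'v::{real_inner,complete_space} \<Rightarrow> 'h::real_inner"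
  assumes "bounded_linear g"
  shows bounded_linear_gram: "bounded_linear (adjoint g \<circ> g)"
    and selfadjoint_gram: "selfadjoint (adjoint g \<circ> g)"
    and inner_gram: "inner ((adjoint g \<circ> g) x) x = (norm (g x))\<^sup>2"
proof -
  show "bounded_linear (adjoint g \<circ> g)"
    unfolding comp_def by (rule bounded_linear_compose[OF bounded_linear_adjoint_hilbert assms]) fact
  show "selfadjoint (adjoint g \<circ> g)" by (rule selfadjoint_adjoint_comp[OF assms])
  show "inner ((adjoint g \<circ> g) x) x = (norm (g x))\<^sup>2"
    using adjoint_hilbert[OF assms, of x "g x"] by (simp add: inner_commute power2_norm_eq_inner)
qed

lemma compact_operator_gram:
  fixes g :: "'v::{real_inner,complete_space} \<Rightarrow> 'h::real_inner"
  assumes "bounded_linear g" and "compact_operator g"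
  shows "compact_operator (adjoint g \<circ> g)"
  by (rule compact_operator_bounded_linear_comp[OF bounded_linear_adjoint_hilbert[OF assms(1)] assms(2)])

lemma first_eigenvalue_rayleigh_bound:
  fixes g :: "'v::{real_inner,complete_space} \<Rightarrow> 'h::{real_inner,complete_space}"
  assumes lin: "bounded_linear g" and cpt: "compact_operator g" and "0 < lam1"
    and lam1_min: "\<And>lam. is_eigenvalue g lam \<Longrightarrow> lam1 \<le> lam"
  shows "lam1 * (norm (g x))\<^sup>2 \<le> (norm x)\<^sup>2"
proof (rule ccontr)
  assume "\<not> ?thesis"
  then have "1 / lam1 * (norm x)\<^sup>2 < inner ((adjoint g \<circ> g) x) x"
    using \<open>0 < lam1\<close> unfolding inner_gram[OF lin] by (simp add: field_simps)
  from compact_selfadjoint_eigenvalue_above[OF bounded_linear_gram[OF lin] selfadjoint_gram[OF lin]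
      compact_operator_gram[OF lin cpt] _ this]
  obtain \<sigma> y where "1 / lam1 < \<sigma>" "y \<noteq> 0" "adjoint g (g y) = \<sigma> *\<^sub>R y"
    using \<open>0 < lam1\<close> by auto
  moreover from this have "0 < \<sigma>" using \<open>0 < lam1\<close> by (smt (verit) divide_pos_pos)
  ultimately have "lam1 \<le> 1 / \<sigma>" by (intro lam1_min is_eigenvalue_if_gram_eigenvector[OF lin])
  with \<open>1 / lam1 < \<sigma>\<close> \<open>0 < \<sigma>\<close> \<open>0 < lam1\<close> show False by (simp add: field_simps)
qed

lemma onorm_le_inverse_sqrt_first_eigenvalue:
  fixes g :: "'v::{real_inner,complete_space} \<Rightarrow> 'h::{real_inner,complete_space}"
  assumes lin: "bounded_linear g" and cpt: "compact_operator g" and "0 < lam1"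
    and lam1_min: "\<And>lam. is_eigenvalue g lam \<Longrightarrow> lam1 \<le> lam"
  shows "onorm g \<le> 1 / sqrt lam1"
proof (rule onorm_bound)
  fix x
  have "(norm (g x))\<^sup>2 \<le> (norm x / sqrt lam1)\<^sup>2"
    using first_eigenvalue_rayleigh_bound[OF assms, of x] \<open>0 < lam1\<close>
    by (simp add: power_divide field_simps)
  then show "norm (g x) \<le> 1 / sqrt lam1 * norm x"
    using \<open>0 < lam1\<close> by (simp add: power2_le_iff_abs_le)
qed (use \<open>0 < lam1\<close> in simp)

lemma relative_distance_le_imp_outside:
  fixes lam1 lam_s \<nu> :: real
  assumes "0 < lam1" and "lam1 < lam_s" and "0 < \<nu>"
    and closer: "\<bar>(lam1 - lam_s) / lam1\<bar> \<le> \<bar>(\<nu> - lam_s) / \<nu>\<bar>"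
  shows "\<nu> \<le> lam1 \<or> lam_s\<^sup>2 / lam1 \<le> \<nu>"
proof (rule ccontr)
  assume "\<not> ?thesis"
  then have "lam1 < \<nu>" and "\<nu> * lam1 < lam_s\<^sup>2" using \<open>0 < lam1\<close> by (auto simp: field_simps)
  define a t where "a = lam_s / lam1" and "t = lam_s / \<nu>"
  have "1 < a" "t < a" "1 < a * t"
    using assms \<open>lam1 < \<nu>\<close> \<open>\<nu> * lam1 < lam_s\<^sup>2\<close> unfolding a_def t_def
    by (auto simp: field_simps power2_eq_square)
  have "\<bar>(lam1 - lam_s) / lam1\<bar> = a - 1" using assms unfolding a_def by (simp add: field_simps)
  moreover have "\<bar>(\<nu> - lam_s) / \<nu>\<bar> = \<bar>1 - t\<bar>" using \<open>0 < \<nu>\<close> unfolding t_def by (simp add: field_simps)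
  moreover have "\<bar>1 - t\<bar> < a - 1"
  proof (cases "1 \<le> t")
    case False
    \<comment> \<open>\<open>a (a + t - 2) > a\<^sup>2 + 1 - 2 a = (a - 1)\<^sup>2\<close>\<close>
    have "0 \<le> (a - 1)\<^sup>2" by simp
    then have "0 < a * (a + t - 2)" using \<open>1 < a * t\<close> by (simp add: power2_eq_square algebra_simps)
    then show ?thesis using False \<open>1 < a\<close> by (simp add: zero_less_mult_iff)
  qed (use \<open>t < a\<close> in simp)
  ultimately show False using closer by simp
qed

lemma gram_eigenvalue_outside:
  fixes g :: "'v::{real_inner,complete_space} \<Rightarrow> 'h::real_inner"
  assumes lin: "bounded_linear g"
    and closest: "\<And>lam. is_eigenvalue g lam \<Longrightarrow>
                     \<bar>(lam1 - lam_s) / lam1\<bar> \<le> \<bar>(lam - lam_s) / lam\<bar>"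
    and "0 < lam1" and "lam1 < lam_s"
    and "x \<noteq> 0" and eig: "(adjoint g \<circ> g) x = \<mu> *\<^sub>R x"
  shows "\<mu> \<le> lam1 / lam_s\<^sup>2 \<or> 1 / lam1 \<le> \<mu>"
proof (cases "0 < \<mu>")
  case True
  then have "is_eigenvalue g (1 / \<mu>)"
    using is_eigenvalue_if_gram_eigenvector[OF lin \<open>x \<noteq> 0\<close>] eig by simp
  from relative_distance_le_imp_outside[OF \<open>0 < lam1\<close> \<open>lam1 < lam_s\<close> _ closest[OF this]]
  have "1 / \<mu> \<le> lam1 \<or> lam_s\<^sup>2 / lam1 \<le> 1 / \<mu>" using True by simp
  moreover have "0 < lam_s" using \<open>0 < lam1\<close> \<open>lam1 < lam_s\<close> by linarith
  ultimately show ?thesis using True \<open>0 < lam1\<close> by (auto simp: field_simps)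
next
  case False
  moreover have "0 \<le> lam1 / lam_s\<^sup>2" using \<open>0 < lam1\<close> by simp
  ultimately show ?thesis by linarith
qed

lemma residual_norm_lower_bound:
  fixes g :: "'v::{real_inner,complete_space} \<Rightarrow> 'h::{real_inner,complete_space}"
  assumes lin: "bounded_linear g" and cpt: "compact_operator g"
    and closest: "\<And>lam. is_eigenvalue g lam \<Longrightarrow>
                     \<bar>(lam1 - lam_s) / lam1\<bar> \<le> \<bar>(lam - lam_s) / lam\<bar>"
    and "0 < lam1" and "lam1 < lam_s"
    and w_def: "\<And>v. inner w v = inner u_s v - lam_s * inner (g u_s) (g v)"
  shows "norm (g u_s) * (lam_s - lam1) / sqrt lam1 \<le> norm w"
proof -
  define K where "K = adjoint g \<circ> g"
  define N where "N = norm (g u_s)"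
  have "inner (K x) v = inner (g x) (g v)" for x v
    using adjoint_hilbert[OF lin, of v "g x"] unfolding K_def by (simp add: inner_commute)
  then have w_eq: "w = u_s + (- lam_s) *\<^sub>R K u_s"
    by (subst vector_eq_rdot[symmetric]) (simp add: w_def inner_diff_left)
  have KuN: "inner (K u_s) u_s = N\<^sup>2" unfolding K_def N_def by (rule inner_gram[OF lin])
  have "0 < lam_s" using assms by linarith
  have "lam1 * lam1 \<le> lam_s\<^sup>2"
    using \<open>0 < lam1\<close> \<open>lam1 < lam_s\<close> by (simp add: power2_eq_square mult_mono)
  then have "lam1 / lam_s\<^sup>2 \<le> 1 / lam1" using \<open>0 < lam1\<close> \<open>0 < lam_s\<close> by (simp add: field_simps)
  \<comment> \<open>By the closeness hypothesis \<open>K\<close> has no eigenvalue in \<open>(\<lambda>\<^sub>1/\<lambda>\<^sub>*\<^sup>2, 1/\<lambda>\<^sub>1)\<close>.\<close>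
  have gap: "0 \<le> (norm (K u_s))\<^sup>2 - (lam1 / lam_s\<^sup>2 + 1 / lam1) * inner (K u_s) u_s
                     + lam1 / lam_s\<^sup>2 * (1 / lam1) * (norm u_s)\<^sup>2"
    unfolding K_def
  proof (rule spectral_gap_quadratic_form_nonneg)
    show "0 \<le> lam1 / lam_s\<^sup>2" using \<open>0 < lam1\<close> by simp
  qed (use lin cpt bounded_linear_gram selfadjoint_gram compact_operator_gram
      \<open>lam1 / lam_s\<^sup>2 \<le> 1 / lam1\<close> gram_eigenvalue_outside[OF lin closest \<open>0 < lam1\<close> \<open>lam1 < lam_s\<close>]
      in \<open>blast+\<close>)
  have "(norm w)\<^sup>2 = (norm u_s)\<^sup>2 - 2 * lam_s * N\<^sup>2 + lam_s\<^sup>2 * (norm (K u_s))\<^sup>2"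
    unfolding w_eq norm_add_scaleR_power2 using KuN by (simp add: inner_commute)
  also have "\<dots> = N\<^sup>2 * (lam_s - lam1)\<^sup>2 / lam1 + lam_s\<^sup>2 * ((norm (K u_s))\<^sup>2
      - (lam1 / lam_s\<^sup>2 + 1 / lam1) * N\<^sup>2 + lam1 / lam_s\<^sup>2 * (1 / lam1) * (norm u_s)\<^sup>2)"
    using \<open>0 < lam1\<close> \<open>0 < lam_s\<close> by (simp add: field_simps power2_eq_square)
  finally have "N\<^sup>2 * (lam_s - lam1)\<^sup>2 / lam1 \<le> (norm w)\<^sup>2" using gap KuN by simp
  also have "N\<^sup>2 * (lam_s - lam1)\<^sup>2 / lam1 = (N * (lam_s - lam1) / sqrt lam1)\<^sup>2"
    using \<open>0 < lam1\<close> by (simp add: power_divide power_mult_distrib)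
  finally show ?thesis unfolding N_def by (rule power2_le_imp_le) simp
qed

lemma first_eigenvalue_residual_bound:
  fixes g :: "'v::{real_inner,complete_space} \<Rightarrow> 'h::{real_inner,complete_space}"
  assumes lin: "bounded_linear g" and cpt: "compact_operator g" and "0 < lam1"
    and lam1_min: "\<And>lam. is_eigenvalue g lam \<Longrightarrow> lam1 \<le> lam"
    and closest: "\<And>lam. is_eigenvalue g lam \<Longrightarrow>
                     \<bar>(lam1 - lam_s) / lam1\<bar> \<le> \<bar>(lam - lam_s) / lam\<bar>"
    and w_def: "\<And>v. inner w v = inner u_s v - lam_s * inner (g u_s) (g v)"
    and "0 \<le> A" and "0 \<le> B" and w_bound: "norm w \<le> A + onorm g * B"
  shows "norm (g u_s) * (lam_s - lam1) \<le> A * sqrt lam1 + B"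
proof (cases "lam_s \<le> lam1")
  case True
  then have "norm (g u_s) * (lam_s - lam1) \<le> 0" by (simp add: mult_nonneg_nonpos)
  moreover have "0 \<le> A * sqrt lam1 + B" using \<open>0 \<le> A\<close> \<open>0 \<le> B\<close> \<open>0 < lam1\<close> by simp
  ultimately show ?thesis by linarith
next
  case False
  define r where "r = sqrt lam1"
  have "0 < r" unfolding r_def using \<open>0 < lam1\<close> by simp
  have "norm (g u_s) * (lam_s - lam1) / r \<le> norm w"
    unfolding r_def using residual_norm_lower_bound[OF lin cpt closest \<open>0 < lam1\<close> _ w_def] False by simp
  also have "\<dots> \<le> A + onorm g * B" by (rule w_bound)
  also have "\<dots> \<le> A + 1 / r * B"
    using mult_right_mono[OF onorm_le_inverse_sqrt_first_eigenvalue[OF lin cpt \<open>0 < lam1\<close> lam1_min]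
        \<open>0 \<le> B\<close>] unfolding r_def by simp
  finally have "norm (g u_s) * (lam_s - lam1) \<le> (A + 1 / r * B) * r"
    using \<open>0 < r\<close> by (simp add: pos_divide_le_eq)
  also have "\<dots> = A * r + B" using \<open>0 < r\<close> by (simp add: distrib_right)
  finally show ?thesis unfolding r_def .
qed

lemma quadratic_root_pos:
  fixes \<alpha> c :: real
  assumes "0 \<le> \<alpha>" and "0 < c"
  shows "0 < (- \<alpha> + sqrt (\<alpha>\<^sup>2 + 4 * c)) / 2"
proof -
  have "sqrt (\<alpha>\<^sup>2) < sqrt (\<alpha>\<^sup>2 + 4 * c)" using \<open>0 < c\<close> by (intro real_sqrt_less_mono) simp
  then show ?thesis using \<open>0 \<le> \<alpha>\<close> by simp
qed

lemma quadratic_root_le: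
  fixes \<alpha> c x :: real
  assumes "0 \<le> \<alpha>" and "0 \<le> x" and "c \<le> x\<^sup>2 + \<alpha> * x"
  shows "(- \<alpha> + sqrt (\<alpha>\<^sup>2 + 4 * c)) / 2 \<le> x"
proof -
  have "\<alpha>\<^sup>2 + 4 * c \<le> (2 * x + \<alpha>)\<^sup>2" using assms(3) by (simp add: power2_eq_square algebra_simps)
  then have "sqrt (\<alpha>\<^sup>2 + 4 * c) \<le> 2 * x + \<alpha>"
    using assms(1,2) real_sqrt_le_mono by fastforce
  then show ?thesis by simp
qed

theorem theorem3p4:
  fixes g :: "'v::{real_inner, complete_space} \<Rightarrow> 'h::{real_inner, complete_space}"
    and lam1 lam_s A B :: real
    and u_s w :: 'v
  assumes lin: "bounded_linear g"
    and cpt: "compact_operator g"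
    and eig1: "is_eigenvalue g lam1"
    and lam1_min: "\<And>lam. is_eigenvalue g lam \<Longrightarrow> lam1 \<le> lam"
    and w_def: "\<And>v. inner w v = inner u_s v - lam_s * inner (g u_s) (g v)"
    and closest: "\<And>lam. is_eigenvalue g lam \<Longrightarrow>
                     \<bar>(lam1 - lam_s) / lam1\<bar> \<le> \<bar>(lam - lam_s) / lam\<bar>"
    and A_nonneg: "A \<ge> 0" and B_nonneg: "B \<ge> 0"
    and B_less: "B < lam_s * norm (g u_s)"
    and w_bound: "norm w \<le> A + onorm g * B"
  shows "(let \<alpha> = A / norm (g u_s); \<beta> = B / norm (g u_s);
              X2 = (- \<alpha> + sqrt (\<alpha>\<^sup>2 + 4 * (lam_s - \<beta>))) / 2
          in X2\<^sup>2 \<le> lam1 \<and> onorm g \<le> 1 / X2)"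
proof -
  define N where "N = norm (g u_s)"
  define \<alpha> \<beta> where "\<alpha> = A / N" and "\<beta> = B / N"
  define X2 where "X2 = (- \<alpha> + sqrt (\<alpha>\<^sup>2 + 4 * (lam_s - \<beta>))) / 2"
  have "0 < lam1" using eig1 by (rule is_eigenvalue_pos)
  have "0 < N" using B_less B_nonneg unfolding N_def
    by (metis mult_zero_right norm_ge_zero order.strict_iff_order order_le_less_trans)
  have "0 \<le> \<alpha>" and "0 < lam_s - \<beta>"
    using A_nonneg B_less \<open>0 < N\<close> unfolding \<alpha>_def \<beta>_def N_def by (simp_all add: field_simps)
  have "N * (lam_s - lam1) \<le> A * sqrt lam1 + B" unfolding N_def
    by (rule first_eigenvalue_residual_bound[OF lin cpt \<open>0 < lam1\<close> lam1_min closest w_def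
          A_nonneg B_nonneg w_bound])
  then have "(N * lam_s - B) / N \<le> (N * lam1 + A * sqrt lam1) / N"
    using \<open>0 < N\<close> by (intro divide_right_mono) (simp_all add: algebra_simps)
  then have "lam_s - \<beta> \<le> (sqrt lam1)\<^sup>2 + \<alpha> * sqrt lam1"
    using \<open>0 < N\<close> \<open>0 < lam1\<close> unfolding \<alpha>_def \<beta>_def
    by (simp add: diff_divide_distrib add_divide_distrib)
  then have "X2 \<le> sqrt lam1"
    unfolding X2_def by (rule quadratic_root_le[OF \<open>0 \<le> \<alpha>\<close> real_sqrt_ge_zero[OF less_imp_le[OF \<open>0 < lam1\<close>]]])
  moreover have "0 < X2" unfolding X2_def by (rule quadratic_root_pos[OF \<open>0 \<le> \<alpha>\<close> \<open>0 < lam_s - \<beta>\<close>])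
  ultimately have "X2\<^sup>2 \<le> lam1" and "1 / sqrt lam1 \<le> 1 / X2"
    using \<open>0 < lam1\<close> power_mono[of X2 "sqrt lam1" 2] by (simp_all add: frac_le)
  moreover have "onorm g \<le> 1 / sqrt lam1"
    by (rule onorm_le_inverse_sqrt_first_eigenvalue[OF lin cpt \<open>0 < lam1\<close> lam1_min])
  ultimately show ?thesis unfolding Let_def X2_def \<alpha>_def \<beta>_def N_def by linarith
qed

end
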